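(* Let $G$ be an almost hypocyclic graph with exceptional vertex $w$. Then for every partition $(W,X)$ of $V(G)$ with $|W| > 1$ and $|X| > 1$, we have $p(G[W]) < |X|$ and $k(G[W]) < |X|$.
   Context: All graphs are finite, undirected, connected (except where stated, e.g. induced subgraphs), without loops or multiple edges. A graph is hamiltonian if it has a cycle through all its vertices. A graph $G$ is almost hypocyclic if there exists a vertex $w$ (the exceptional vertex) such that $G - w$ is non-hamiltonian but $G - v$ is hamiltonian for every vertex $v \neq w$. $G[S]$ denotes the subgraph induced by $S \subseteq V(G)$. For a possibly disconnected graph $G$: $p(G)$ is the minimum number of pairwise vertex-disjoint paths (a single vertex counts as a path) needed to cover all vertices of $G$; $V_1(G)$ is the set of vertices of degree $1$ in $G$; $I(G)$ is the set of all isolated vertices and isolated edges of $G$ (i.e. components isomorphic to $K_1$ or $K_2$), and $|I(G)|$ is their number; and $k(G)$ is defined recursively by $k(G) = 0$ if $G$ is empty, $k(G) = \max\{1, \lceil |V_1(G)|/2 \rceil\}$ if $I(G) = \emptyset$ but $G$ is not empty, and $k(G) = |I(G)| + k(G - I(G))$ otherwise, where $G - I(G)$ is obtained by removing the vertices of these isolated vertices and edges. *)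

theory Defs
  imports Main
begin

definition simple_graph :: "'a set \<Rightarrow> ('a \<Rightarrow> 'a \<Rightarrow> bool) \<Rightarrow> bool" where
  "simple_graph V E \<longleftrightarrow> finite V \<and> (\<forall>x y. E x y \<longrightarrow> x \<in> V \<and> y \<in> V \<and> x \<noteq> y \<and> E y x)"

definition is_path :: "'a set \<Rightarrow> ('a \<Rightarrow> 'a \<Rightarrow> bool) \<Rightarrow> 'a list \<Rightarrow> bool" where
  "is_path V E xs \<longleftrightarrow> xs \<noteq> [] \<and> distinct xs \<and> set xs \<subseteq> V \<and>
     (\<forall>i. Suc i < length xs \<longrightarrow> E (xs ! i) (xs ! Suc i))"

definition connected_graph :: "'a set \<Rightarrow> ('a \<Rightarrow> 'a \<Rightarrow> bool) \<Rightarrow> bool" where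
  "connected_graph V E \<longleftrightarrow> V \<noteq> {} \<and>
     (\<forall>x\<in>V. \<forall>y\<in>V. \<exists>xs. is_path V E xs \<and> hd xs = x \<and> last xs = y)"

definition induced :: "('a \<Rightarrow> 'a \<Rightarrow> bool) \<Rightarrow> 'a set \<Rightarrow> 'a \<Rightarrow> 'a \<Rightarrow> bool" where
  "induced E S = (\<lambda>x y. E x y \<and> x \<in> S \<and> y \<in> S)"

definition hamiltonian :: "'a set \<Rightarrow> ('a \<Rightarrow> 'a \<Rightarrow> bool) \<Rightarrow> bool" where
  "hamiltonian V E \<longleftrightarrow> (\<exists>xs. is_path V E xs \<and> set xs = V \<and> length xs \<ge> 3 \<and>
      E (last xs) (hd xs))"

definition almost_hypocyclic :: "'a set \<Rightarrow> ('a \<Rightarrow> 'a \<Rightarrow> bool) \<Rightarrow> 'a \<Rightarrow> bool" where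
  "almost_hypocyclic V E w \<longleftrightarrow> simple_graph V E \<and> connected_graph V E \<and> w \<in> V \<and>
     \<not> hamiltonian (V - {w}) (induced E (V - {w})) \<and>
     (\<forall>v\<in>V. v \<noteq> w \<longrightarrow> hamiltonian (V - {v}) (induced E (V - {v})))"

definition path_cover :: "'a set \<Rightarrow> ('a \<Rightarrow> 'a \<Rightarrow> bool) \<Rightarrow> 'a list set \<Rightarrow> bool" where
  "path_cover V E P \<longleftrightarrow> finite P \<and> (\<forall>xs\<in>P. is_path V E xs) \<and>
     (\<forall>xs\<in>P. \<forall>ys\<in>P. xs \<noteq> ys \<longrightarrow> set xs \<inter> set ys = {}) \<and>
     (\<Union>xs\<in>P. set xs) = V"

definition path_cover_number :: "'a set \<Rightarrow> ('a \<Rightarrow> 'a \<Rightarrow> bool) \<Rightarrow> nat" where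
  "path_cover_number V E = (LEAST n. \<exists>P. path_cover V E P \<and> card P = n)"

definition deg :: "'a set \<Rightarrow> ('a \<Rightarrow> 'a \<Rightarrow> bool) \<Rightarrow> 'a \<Rightarrow> nat" where
  "deg V E v = card {u\<in>V. E v u}"

definition V1 :: "'a set \<Rightarrow> ('a \<Rightarrow> 'a \<Rightarrow> bool) \<Rightarrow> 'a set" where
  "V1 V E = {v\<in>V. deg V E v = 1}"

definition iso_verts :: "'a set \<Rightarrow> ('a \<Rightarrow> 'a \<Rightarrow> bool) \<Rightarrow> 'a set" where
  "iso_verts V E = {v\<in>V. deg V E v = 0}"

definition iso_edges :: "'a set \<Rightarrow> ('a \<Rightarrow> 'a \<Rightarrow> bool) \<Rightarrow> 'a set set" where
  "iso_edges V E = {{u, v} | u v. u \<in> V \<and> v \<in> V \<and> E u v \<and> deg V E u = 1 \<and> deg V E v = 1}"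

definition card_I :: "'a set \<Rightarrow> ('a \<Rightarrow> 'a \<Rightarrow> bool) \<Rightarrow> nat" where
  "card_I V E = card (iso_verts V E) + card (iso_edges V E)"

definition verts_I :: "'a set \<Rightarrow> ('a \<Rightarrow> 'a \<Rightarrow> bool) \<Rightarrow> 'a set" where
  "verts_I V E = iso_verts V E \<union> \<Union>(iso_edges V E)"

text \<open>k(G), defined by the recursion in the paper; the recursion is run with
fuel (card V + 1), which is always enough since every recursive step removes
at least one vertex.\<close>
fun k_aux :: "nat \<Rightarrow> 'a set \<Rightarrow> ('a \<Rightarrow> 'a \<Rightarrow> bool) \<Rightarrow> nat" where
  "k_aux 0 V E = 0"
| "k_aux (Suc n) V E =
     (if V = {} then 0
      else if card_I V E = 0 then max 1 ((card (V1 V E) + 1) div 2)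
      else card_I V E + k_aux n (V - verts_I V E) (induced E (V - verts_I V E)))"

definition k_num :: "'a set \<Rightarrow> ('a \<Rightarrow> 'a \<Rightarrow> bool) \<Rightarrow> nat" where
  "k_num V E = k_aux (Suc (card V)) V E"

end

theory Submission
  imports Defs
begin

text \<open>Take a vertex \<open>v \<in> X\<close> other than \<open>w\<close> and a second vertex \<open>x \<in> X\<close>. The graph \<open>G - v\<close>
  has a Hamiltonian cycle; opened up at \<open>x\<close> it becomes a Hamiltonian path of \<open>G - v - x\<close>.
  Deleting the remaining \<open>|X| - 2\<close> vertices of \<open>X\<close> cuts this path into at most \<open>|X| - 1\<close>
  paths covering \<open>W\<close>, so \<open>p(G[W]) < |X|\<close>. For \<open>k\<close> it then suffices that \<open>k(H) \<le> p(H)\<close> for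
  every graph \<open>H\<close>: a path cover has at least \<open>|V\<^sub>1(H)|/2\<close> paths, since vertices of
  degree one can only be path ends, and every isolated vertex or edge of \<open>H\<close> needs a path of
  its own, while the remaining paths cover \<open>H - I(H)\<close>.\<close>

lemma is_path_iff_successively:
  "is_path V E xs \<longleftrightarrow> xs \<noteq> [] \<and> distinct xs \<and> set xs \<subseteq> V \<and> successively E xs"
  unfolding is_path_def successively_conv_nth by blast

lemma is_path_mono: "is_path V E xs \<Longrightarrow> V \<subseteq> V' \<Longrightarrow> is_path V' E xs"
  unfolding is_path_def by blast

lemma successively_const_on:
  assumes "successively R xs" and "\<And>x y. x \<in> set xs \<Longrightarrow> R x y \<Longrightarrow> f x = f y"
    and "z \<in> set xs"
  shows "f z = f (hd xs)"
  using assms by (induction xs) (auto simp: successively_Cons)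

lemma simple_graph_induced: "simple_graph V E \<Longrightarrow> S \<subseteq> V \<Longrightarrow> simple_graph S (induced E S)"
  unfolding simple_graph_def induced_def by (auto intro: finite_subset)

lemma hamiltonian_path_avoiding:
  assumes "hamiltonian V E" and "x \<in> V"
  obtains ts where "distinct ts" "successively E ts" "set ts = V - {x}"
proof -
  obtain cs where cs: "is_path V E cs" "set cs = V" "E (last cs) (hd cs)"
    using assms(1) unfolding hamiltonian_def by blast
  then obtain as bs where split: "cs = as @ x # bs"
    using assms(2) by (metis split_list)
  have "distinct (bs @ as)" and "set (bs @ as) = V - {x}"
    using cs split by (auto simp: is_path_def)
  moreover have "successively E (bs @ as)"
  proof -
    have "successively E as" "successively E (x # bs)"
      using cs(1) split by (auto simp: is_path_iff_successively successively_append_iff)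
    moreover have "bs \<noteq> [] \<Longrightarrow> as \<noteq> [] \<Longrightarrow> E (last bs) (hd as)"
      using cs(3) split by simp
    ultimately show ?thesis by (auto simp: successively_append_iff successively_Cons)
  qed
  ultimately show thesis using that by blast
qed

lemma path_cover_induced: "path_cover W E P \<Longrightarrow> path_cover W (induced E W) P"
  unfolding path_cover_def is_path_def induced_def by (auto dest: nth_mem)

lemma path_cover_insert:
  assumes "path_cover A E P" and "is_path (set p) E p" and "set p \<inter> A = {}"
  shows "path_cover (A \<union> set p) E (insert p P)"
  using assms unfolding path_cover_def by (auto intro: is_path_mono simp: is_path_def)

lemma path_cover_number_attained:
  assumes "finite V"
  obtains P where "path_cover V E P" "card P = path_cover_number V E"
proof -
  have "path_cover V E ((\<lambda>v. [v]) ` V)"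
    using assms unfolding path_cover_def is_path_def by auto
  then show thesis
    using that LeastI_ex[of "\<lambda>n. \<exists>P. path_cover V E P \<and> card P = n"]
    unfolding path_cover_number_def by blast
qed

lemma path_cover_number_le: "path_cover V E P \<Longrightarrow> path_cover_number V E \<le> card P"
  unfolding path_cover_number_def by (auto intro: Least_le)

lemma path_cover_delete_vertices:
  assumes "distinct ys" and "successively E ys"
  shows "\<exists>P. path_cover (set ys - S) E P \<and> card P \<le> card (set ys \<inter> S) + 1"
  using assms
proof (induction ys rule: length_induct)
  case (1 ys)
  show ?case
  proof (cases "\<exists>s \<in> set ys. s \<in> S")
    case False
    then have "path_cover (set ys - S) E (if ys = [] then {} else {ys})"
      using "1.prems" by (auto simp: path_cover_def is_path_iff_successively)
    then show ?thesis by (intro exI[of _ "if ys = [] then {} else {ys}"]) simp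
  next
    case True
    then obtain as s bs where ys: "ys = as @ s # bs" "s \<in> S" "\<forall>a \<in> set as. a \<notin> S"
      by (rule split_list_first_propE[of ys "\<lambda>s. s \<in> S"])
    have bs: "distinct bs" "successively E bs"
      using "1.prems" ys(1) by (auto simp: successively_append_iff successively_Cons)
    obtain P where P: "path_cover (set bs - S) E P" "card P \<le> card (set bs \<inter> S) + 1"
      using "1.IH"[rule_format, OF _ bs] ys(1) by auto
    have "set ys \<inter> S = insert s (set bs \<inter> S)" and "s \<notin> set bs"
      using ys "1.prems"(1) by auto
    then have card_S: "card (set ys \<inter> S) = card (set bs \<inter> S) + 1" by simp
    show ?thesis
    proof (cases "as = []")
      case True
      then show ?thesis using P ys card_S by (intro exI[of _ P]) auto
    next
      case False
      have "is_path (set as) E as"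
        using False "1.prems" ys(1) by (auto simp: is_path_iff_successively successively_append_iff)
      moreover have "set as \<inter> (set bs - S) = {}" using "1.prems"(1) ys(1) by auto
      ultimately have "path_cover (set bs - S \<union> set as) E (insert as P)"
        using P(1) by (intro path_cover_insert) auto
      moreover have "set bs - S \<union> set as = set ys - S" using ys by auto
      moreover have "card (insert as P) \<le> card P + 1" by (simp add: card_insert_le_m1)
      ultimately show ?thesis using P(2) card_S by (intro exI[of _ "insert as P"]) auto
    qed
  qed
qed

lemma path_cover_remove_paths:
  assumes "path_cover V E P" and "\<forall>p \<in> P. set p \<subseteq> U \<or> set p \<inter> U = {}"
  shows "path_cover (V - U) (induced E (V - U)) {p \<in> P. set p \<inter> U = {}}"
proof -
  have "path_cover (V - U) E {p \<in> P. set p \<inter> U = {}}"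
    using assms unfolding path_cover_def is_path_def by (auto simp: subset_iff)
  then show ?thesis by (rule path_cover_induced)
qed

definition closed_nbhd :: "'a set \<Rightarrow> ('a \<Rightarrow> 'a \<Rightarrow> bool) \<Rightarrow> 'a \<Rightarrow> 'a set" where
  "closed_nbhd V E x = {y \<in> V. y = x \<or> E x y}"

lemma deg_2_le:
  assumes "finite V" and "a \<in> V" "b \<in> V" "a \<noteq> b" "E v a" "E v b"
  shows "2 \<le> deg V E v"
proof -
  have "card {a, b} \<le> card {u \<in> V. E v u}"
    using assms by (intro card_mono) auto
  then show ?thesis using assms(4) by (simp add: deg_def)
qed

lemma nbhd_deg_1:
  assumes "finite V" and "deg V E u = 1" "E u v" "v \<in> V"
  shows "{z \<in> V. E u z} = {v}"
proof -
  obtain a where "{z \<in> V. E u z} = {a}"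
    using assms(2) by (auto simp: deg_def card_Suc_eq)
  then show ?thesis using assms(3,4) by auto
qed

lemma verts_I_subset: "simple_graph V E \<Longrightarrow> verts_I V E \<subseteq> V"
  unfolding verts_I_def iso_verts_def iso_edges_def by auto

lemma verts_I_adj:
  assumes sg: "simple_graph V E" and x: "x \<in> verts_I V E" and "E x y"
  shows "y \<in> verts_I V E \<and> closed_nbhd V E x = closed_nbhd V E y"
proof -
  have fin: "finite V" and y: "y \<in> V" "E y x"
    using sg \<open>E x y\<close> unfolding simple_graph_def by blast+
  from x consider "x \<in> iso_verts V E"
    | u v where "u \<in> V" "v \<in> V" "E u v" "deg V E u = 1" "deg V E v = 1" "x \<in> {u, v}"
    unfolding verts_I_def iso_edges_def by blast
  then show ?thesis
  proof cases
    case 1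
    then show ?thesis using y \<open>E x y\<close> by (auto simp: iso_verts_def deg_def fin)
  next
    case (2 u v)
    have "E v u" using sg 2(3) unfolding simple_graph_def by blast
    then have "{z \<in> V. E u z} = {v}" "{z \<in> V. E v z} = {u}"
      using nbhd_deg_1[OF fin 2(4,3,2)] nbhd_deg_1[OF fin 2(5) _ 2(1)] by blast+
    then have "closed_nbhd V E u = {u, v}" "closed_nbhd V E v = {u, v}" "y \<in> {u, v}"
      using 2 \<open>E x y\<close> y unfolding closed_nbhd_def by auto
    moreover have "{u, v} \<in> iso_edges V E"
      using 2 unfolding iso_edges_def by blast
    ultimately show ?thesis
      using 2(6) unfolding verts_I_def by auto
  qed
qed

lemma verts_I_adj_iff:
  assumes "simple_graph V E" and "E x y"
  shows "x \<in> verts_I V E \<longleftrightarrow> y \<in> verts_I V E"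
  using assms verts_I_adj[OF assms(1)] unfolding simple_graph_def by blast

lemma path_within_or_disjoint_verts_I:
  assumes "simple_graph V E" and "is_path V E p"
  shows "set p \<subseteq> verts_I V E \<or> set p \<inter> verts_I V E = {}"
proof -
  have "(z \<in> verts_I V E) = (hd p \<in> verts_I V E)" if "z \<in> set p" for z
    using assms that verts_I_adj_iff[OF assms(1)]
    by (intro successively_const_on[of E p]) (auto simp: is_path_iff_successively)
  then show ?thesis by blast
qed

text \<open>A path inside \<open>I(G)\<close> stays in one component of \<open>I(G)\<close>, which is the closed
  neighbourhood of any of its vertices.\<close>

lemma closed_nbhd_path_verts_I:
  assumes "simple_graph V E" and "is_path V E p" and "set p \<subseteq> verts_I V E" and "z \<in> set p"
  shows "closed_nbhd V E z = closed_nbhd V E (hd p)"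
  using assms verts_I_adj[OF assms(1)]
  by (intro successively_const_on[of E p]) (auto simp: is_path_iff_successively)

lemma card_I_le_card_closed_nbhds:
  assumes sg: "simple_graph V E"
  shows "card_I V E \<le> card (closed_nbhd V E ` verts_I V E)"
proof -
  have fin: "finite V" using sg by (simp add: simple_graph_def)
  have fin_edges: "finite (iso_edges V E)"
    using fin by (rule finite_subset[rotated, OF finite_Pow_iff[THEN iffD2]])
      (auto simp: iso_edges_def)
  have "(\<lambda>x. {x}) ` iso_verts V E \<inter> iso_edges V E = {}"
    using sg unfolding iso_edges_def simple_graph_def by (auto simp: doubleton_eq_iff)
  then have "card_I V E = card ((\<lambda>x. {x}) ` iso_verts V E \<union> iso_edges V E)"
    using fin fin_edges by (simp add: card_I_def card_Un_disjoint card_image iso_verts_def)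
  also have "\<dots> \<le> card (closed_nbhd V E ` verts_I V E)"
  proof (rule card_mono)
    show "finite (closed_nbhd V E ` verts_I V E)"
      using fin verts_I_subset[OF sg] by (auto intro: finite_subset)
    have "{x} \<in> closed_nbhd V E ` verts_I V E" if "x \<in> iso_verts V E" for x
    proof -
      have "closed_nbhd V E x = {x}"
        using that fin by (auto simp: closed_nbhd_def iso_verts_def deg_def)
      then show ?thesis using that unfolding verts_I_def by force
    qed
    moreover have "{u, v} \<in> closed_nbhd V E ` verts_I V E"
      if "u \<in> V" "v \<in> V" "E u v" "deg V E u = 1" "deg V E v = 1" for u v
    proof -
      have "{u, v} \<in> iso_edges V E" using that unfolding iso_edges_def by blast
      moreover have "closed_nbhd V E u = {u, v}"
        using that nbhd_deg_1[OF fin, of E u v] unfolding closed_nbhd_def by blast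
      ultimately show ?thesis unfolding verts_I_def by force
    qed
    ultimately show "(\<lambda>x. {x}) ` iso_verts V E \<union> iso_edges V E \<subseteq> closed_nbhd V E ` verts_I V E"
      unfolding iso_edges_def by blast
  qed
  finally show ?thesis .
qed

lemma card_I_le_paths_in_I:
  assumes sg: "simple_graph V E" and pc: "path_cover V E P"
  shows "card_I V E \<le> card {p \<in> P. set p \<subseteq> verts_I V E}"
    (is "_ \<le> card ?PI")
proof -
  have "closed_nbhd V E ` verts_I V E \<subseteq> (\<lambda>p. closed_nbhd V E (hd p)) ` ?PI"
  proof
    fix c assume "c \<in> closed_nbhd V E ` verts_I V E"
    then obtain x where x: "x \<in> verts_I V E" "c = closed_nbhd V E x" by blast
    then obtain p where p: "p \<in> P" "x \<in> set p"
      using pc verts_I_subset[OF sg] unfolding path_cover_def by blast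
    then have "is_path V E p" using pc unfolding path_cover_def by blast
    moreover have "set p \<subseteq> verts_I V E"
      using path_within_or_disjoint_verts_I[OF sg \<open>is_path V E p\<close>] p x by blast
    ultimately show "c \<in> (\<lambda>p. closed_nbhd V E (hd p)) ` ?PI"
      using closed_nbhd_path_verts_I[OF sg] p x by blast
  qed
  moreover have "finite ?PI" using pc unfolding path_cover_def by simp
  ultimately have "card (closed_nbhd V E ` verts_I V E) \<le> card ?PI"
    by (meson card_image_le card_mono finite_imageI le_trans)
  then show ?thesis using card_I_le_card_closed_nbhds[OF sg] by linarith
qed

lemma V1_subset_path_ends:
  assumes sg: "simple_graph V E" and pc: "path_cover V E P"
  shows "V1 V E \<subseteq> hd ` P \<union> last ` P"
proof
  fix v assume v: "v \<in> V1 V E"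
  then obtain p where p: "p \<in> P" "v \<in> set p"
    using pc unfolding path_cover_def V1_def by blast
  then obtain as bs where split: "p = as @ v # bs" by (meson split_list)
  have "as = [] \<or> bs = []"
  proof (rule ccontr)
    assume "\<not> (as = [] \<or> bs = [])"
    moreover have "is_path V E p" using pc p unfolding path_cover_def by blast
    ultimately have "E (last as) v" "E v (hd bs)" "last as \<noteq> hd bs"
      using split by (auto simp: is_path_iff_successively successively_append_iff
          successively_Cons dest!: last_in_set[of as] hd_in_set[of bs])
    then have "2 \<le> deg V E v"
      using sg deg_2_le[of V "last as" "hd bs" E v] by (auto simp: simple_graph_def)
    then show False using v by (simp add: V1_def)
  qed
  then show "v \<in> hd ` P \<union> last ` P" using p split by force
qed

lemma k_aux_le_card_path_cover:
  assumes "simple_graph V E" and "path_cover V E P"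
  shows "k_aux n V E \<le> card P"
  using assms
proof (induction n arbitrary: V E P)
  case 0
  then show ?case by simp
next
  case (Suc n)
  note sg = Suc.prems(1) and pc = Suc.prems(2)
  have finP: "finite P" and paths: "\<forall>p \<in> P. is_path V E p"
    using pc unfolding path_cover_def by blast+
  consider "V = {}" | "V \<noteq> {}" "card_I V E = 0" | "V \<noteq> {}" "card_I V E \<noteq> 0" by blast
  then show ?case
  proof cases
    case 1
    then show ?thesis by simp
  next
    case 2
    have "card (V1 V E) \<le> card (hd ` P) + card (last ` P)"
      using V1_subset_path_ends[OF sg pc] finP
      by (meson card_Un_le card_mono finite_UnI finite_imageI le_trans)
    also have "\<dots> \<le> card P + card P"
      using finP by (intro add_mono card_image_le)
    finally have "(card (V1 V E) + 1) div 2 \<le> card P" by linarith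
    moreover have "P \<noteq> {}" using pc 2 unfolding path_cover_def by auto
    ultimately show ?thesis using 2 finP by (simp add: Suc_leI card_gt_0_iff)
  next
    case 3
    define U where "U = verts_I V E"
    let ?PI = "{p \<in> P. set p \<subseteq> U}" and ?P' = "{p \<in> P. set p \<inter> U = {}}"
    have split: "\<forall>p \<in> P. set p \<subseteq> U \<or> set p \<inter> U = {}"
      using paths path_within_or_disjoint_verts_I[OF sg] unfolding U_def by blast
    have P_split: "P = ?PI \<union> ?P'" using split by blast
    have "?PI \<inter> ?P' = {}"
    proof (intro equalityI subsetI)
      fix p assume "p \<in> ?PI \<inter> ?P'"
      then have "p \<in> P" "set p = {}" by (auto simp only: mem_Collect_eq Int_iff Int_absorb2)
      then show "p \<in> {}" using paths unfolding is_path_def by auto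
    qed simp
    then have card_P: "card P = card ?PI + card ?P'"
      using finP by (subst P_split) (simp add: card_Un_disjoint)
    have "k_aux n (V - U) (induced E (V - U)) \<le> card ?P'"
      using Suc.IH[OF simple_graph_induced[OF sg] path_cover_remove_paths[OF pc split]] by blast
    moreover have "card_I V E \<le> card ?PI"
      using card_I_le_paths_in_I[OF sg pc] unfolding U_def .
    moreover have "k_aux (Suc n) V E = card_I V E + k_aux n (V - U) (induced E (V - U))"
      using 3 unfolding U_def by simp
    ultimately show ?thesis using card_P by linarith
  qed
qed

lemma k_num_le_path_cover_number:
  assumes "simple_graph V E"
  shows "k_num V E \<le> path_cover_number V E"
proof -
  obtain P where "path_cover V E P" "card P = path_cover_number V E"
    using assms path_cover_number_attained unfolding simple_graph_def by blast
  then show ?thesis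
    unfolding k_num_def using k_aux_le_card_path_cover[OF assms] by metis
qed

theorem lemma3p1:
  fixes V :: "'a set" and E :: "'a \<Rightarrow> 'a \<Rightarrow> bool" and w :: 'a and W X :: "'a set"
  assumes "almost_hypocyclic V E w"
    and "W \<union> X = V" and "W \<inter> X = {}"
    and "card W > 1" and "card X > 1"
  shows "path_cover_number W (induced E W) < card X \<and> k_num W (induced E W) < card X"
proof -
  have sg: "simple_graph V E" and ham: "\<And>v. v \<in> V \<Longrightarrow> v \<noteq> w \<Longrightarrow>
      hamiltonian (V - {v}) (induced E (V - {v}))"
    using assms(1) unfolding almost_hypocyclic_def by blast+
  have "\<not> X \<subseteq> {u}" for u using assms(5) card_mono[of "{u}" X] by auto
  then obtain v x where vx: "v \<in> X" "v \<noteq> w" "x \<in> X" "x \<noteq> v" by blast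
  then obtain ts where ts: "distinct ts" "successively (induced E (V - {v})) ts"
      "set ts = V - {v} - {x}"
    using ham assms(2) hamiltonian_path_avoiding[of "V - {v}" _ x] by blast
  have "successively E ts"
    using ts(2) by (rule successively_mono) (simp add: induced_def)
  then obtain P where P: "path_cover (set ts - X) E P" "card P \<le> card (set ts \<inter> X) + 1"
    using path_cover_delete_vertices ts(1) by blast
  have "set ts - X = W" and "set ts \<inter> X = X - {v} - {x}"
    using ts(3) assms(2,3) vx by auto
  moreover have "finite X" using sg assms(2) by (auto simp: simple_graph_def)
  ultimately have "path_cover W (induced E W) P" and "card P < card X"
    using P vx assms(5) by (auto intro: path_cover_induced)
  then have "path_cover_number W (induced E W) < card X"
    using path_cover_number_le by fastforce
  moreover have "k_num W (induced E W) \<le> path_cover_number W (induced E W)"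
    using sg assms(2) by (intro k_num_le_path_cover_number simple_graph_induced) auto
  ultimately show ?thesis by linarith
qed

end
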